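(* Let $n \ge 1$ and let $v_1,\dots,v_n > 0$. Consider the tit-for-tat dynamic on players $N=\{1,\dots,n\}$ with values $v_1,\dots,v_n$, started from a non-degenerate configuration: $x_i(0)>0$ for all $i$, and $y_{i,j}(0)>0$ for all $i,j$ with $\sum_{j=1}^n y_{i,j}(0)=1$ for each $i$. Let $v^* = \max_{j\in[n]} v_j$. Then for each player $i$ there exist constants $c_i, d_i > 0$ such that $$c_i \cdot (v_i v^* )^{\lfloor t/2\rfloor} \le x_i(t) \le d_i \cdot (v_i v^* )^{\lfloor t/2\rfloor} \quad \text{for all } t \in \mathbb{N}.$$ In particular, $\lim_{t\to\infty} x_i(t) = \infty$ if $v_i > 1/v^*$, $\lim_{t\to\infty} x_i(t) = 0$ if $v_i < 1/v^*$, and $x_i(t)$ stays in a bounded region (bounded above and bounded away from $0$) for all $t$ if $v_i = 1/v^*$.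
   Context: Tit-for-tat dynamic: there are $n$ players; player $i$ produces good $i$, and each unit of good $j$ used as input by any player yields $v_j$ units of that player's own good. At time $t$, player $i$ holds an amount $x_i(t)$ of good $i$ and allocates it according to fractions $y_{i,j}(t)\ge 0$, $\sum_j y_{i,j}(t)=1$ ($y_{i,j}(t)$ is the fraction of good $i$ given to player $j$). At each time $t$: (Exchange) every player $i$ receives $w_{i,j}(t) = y_{j,i}(t)\, x_j(t)$ units of each good $j$; (Production) $x_i(t+1) = \sum_{j=1}^n v_j\, w_{i,j}(t)$; (Fractions update) $y_{i,j}(t+1) = \dfrac{v_j\, w_{i,j}(t)}{x_i(t+1)}$. *)

theory Defs
  imports Complex_Main
begin

text \<open>Players are indexed by 0..n-1 (the paper's 1..n). x t i is the amount x_i(t) of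
good i held by player i at time t; y t i j is the fraction y_{i,j}(t) of good i given to
player j at time t.\<close>

definition tft_exchange :: "(nat \<Rightarrow> nat \<Rightarrow> nat \<Rightarrow> real) \<Rightarrow> (nat \<Rightarrow> nat \<Rightarrow> real) \<Rightarrow> nat \<Rightarrow> nat \<Rightarrow> nat \<Rightarrow> real"
  where "tft_exchange y x t i j = y t j i * x t j"

definition tft_dynamic ::
  "nat \<Rightarrow> (nat \<Rightarrow> real) \<Rightarrow> (nat \<Rightarrow> nat \<Rightarrow> real) \<Rightarrow> (nat \<Rightarrow> nat \<Rightarrow> nat \<Rightarrow> real) \<Rightarrow> bool"
  where "tft_dynamic n v x y \<longleftrightarrow>
    (\<forall>t. \<forall>i<n.
        x (Suc t) i = (\<Sum>j<n. v j * tft_exchange y x t i j)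
      \<and> (\<forall>j<n. y (Suc t) i j = v j * tft_exchange y x t i j / x (Suc t) i))"

end

theory Submission
  imports Defs
begin

text \<open>Write \<open>g\<^sub>t(i,j) = y\<^sub>i\<^sub>j(t) x\<^sub>i(t)\<close> for what player i gives to player j at time t.
The fraction update makes the dynamic tit for tat on these gifts, \<open>g\<^sub>t\<^sub>+\<^sub>1(i,j) = v\<^sub>j g\<^sub>t(j,i)\<close>,
so over two steps \<open>g\<^sub>t\<^sub>+\<^sub>2(i,j) = v\<^sub>i v\<^sub>j g\<^sub>t(i,j)\<close>. Since \<open>x\<^sub>i(t)\<close> is the sum of the positive
gifts \<open>g\<^sub>t(i,j)\<close>, it lies between the single gift to a player of maximal value, which is
of exact order \<open>(v\<^sub>i v\<^sup>*)\<^bsup>\<lfloor>t/2\<rfloor>\<^esup>\<close>, and the sum of all gifts, each of at most that order.\<close>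

lemma filterlim_at_top_if_geometric_lower_bound:
  fixes f :: "nat \<Rightarrow> real" and k :: "nat \<Rightarrow> nat"
  assumes k: "filterlim k at_top sequentially"
    and "0 < c" and "1 < q" and lower: "\<And>t. c * q ^ k t \<le> f t"
  shows "filterlim f at_top sequentially"
proof -
  have "filterlim (\<lambda>m. q ^ m) at_top sequentially"
    using \<open>1 < q\<close> by (intro filterlim_at_infinity_imp_filterlim_at_top
        filterlim_realpow_sequentially_gt1) (auto intro: always_eventually)
  then have "filterlim (\<lambda>t. c * q ^ k t) at_top sequentially"
    using \<open>0 < c\<close> k by (intro filterlim_tendsto_pos_mult_at_top[OF tendsto_const])
      (auto intro: filterlim_compose)
  then show ?thesis
    by (rule filterlim_at_top_mono) (simp add: lower)
qed

lemma tendsto_zero_if_geometric_upper_bound: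
  fixes f :: "nat \<Rightarrow> real" and k :: "nat \<Rightarrow> nat"
  assumes k: "filterlim k at_top sequentially"
    and "\<bar>q\<bar> < 1" and nonneg: "\<And>t. 0 \<le> f t" and upper: "\<And>t. f t \<le> d * q ^ k t"
  shows "f \<longlonglongrightarrow> 0"
proof -
  have "(\<lambda>m. q ^ m) \<longlonglongrightarrow> 0"
    using \<open>\<bar>q\<bar> < 1\<close> by (intro LIMSEQ_power_zero) simp
  then have "(\<lambda>t. q ^ k t) \<longlonglongrightarrow> 0"
    using k by (rule filterlim_compose)
  then have "(\<lambda>t. d * q ^ k t) \<longlonglongrightarrow> 0"
    by (rule tendsto_mult_right_zero)
  from tendsto_sandwich[OF _ _ tendsto_const this] show ?thesis
    by (simp add: nonneg upper)
qed

locale tft_game =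
  fixes n :: nat and v :: "nat \<Rightarrow> real"
    and x :: "nat \<Rightarrow> nat \<Rightarrow> real" and y :: "nat \<Rightarrow> nat \<Rightarrow> nat \<Rightarrow> real"
  assumes players_nonempty: "0 < n"
    and value_pos: "\<And>j. j < n \<Longrightarrow> 0 < v j"
    and holding_0_pos: "\<And>i. i < n \<Longrightarrow> 0 < x 0 i"
    and fraction_0_pos: "\<And>i j. i < n \<Longrightarrow> j < n \<Longrightarrow> 0 < y 0 i j"
    and fractions_0_sum: "\<And>i. i < n \<Longrightarrow> (\<Sum>j<n. y 0 i j) = 1"
    and dynamic: "tft_dynamic n v x y"
begin

lemma holding_Suc: "i < n \<Longrightarrow> x (Suc t) i = (\<Sum>j<n. v j * (y t j i * x t j))"
  using dynamic by (simp add: tft_dynamic_def tft_exchange_def)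

lemma fraction_Suc:
  "i < n \<Longrightarrow> j < n \<Longrightarrow> y (Suc t) i j = v j * (y t j i * x t j) / x (Suc t) i"
  using dynamic by (simp add: tft_dynamic_def tft_exchange_def)

lemma holdings_and_fractions_pos: "(\<forall>i<n. 0 < x t i) \<and> (\<forall>i<n. \<forall>j<n. 0 < y t i j)"
proof (induction t)
  case 0
  show ?case by (simp add: holding_0_pos fraction_0_pos)
next
  case (Suc t)
  have holding_pos: "0 < x (Suc t) i" if "i < n" for i
    unfolding holding_Suc[OF that] using Suc that players_nonempty
    by (intro sum_pos) (auto intro!: mult_pos_pos value_pos)
  moreover have "0 < y (Suc t) i j" if "i < n" "j < n" for i j
    unfolding fraction_Suc[OF that] using Suc that holding_pos[OF \<open>i < n\<close>]
    by (auto intro!: divide_pos_pos mult_pos_pos value_pos)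
  ultimately show ?case by blast
qed

lemma holding_pos: "i < n \<Longrightarrow> 0 < x t i"
  using holdings_and_fractions_pos by blast

lemma fraction_pos: "i < n \<Longrightarrow> j < n \<Longrightarrow> 0 < y t i j"
  using holdings_and_fractions_pos by blast

definition gift :: "nat \<Rightarrow> nat \<Rightarrow> nat \<Rightarrow> real"
  where "gift t i j = y t i j * x t i"

lemma gift_pos: "i < n \<Longrightarrow> j < n \<Longrightarrow> 0 < gift t i j"
  by (simp add: gift_def holding_pos fraction_pos)

lemma gift_Suc: "i < n \<Longrightarrow> j < n \<Longrightarrow> gift (Suc t) i j = v j * gift t j i"
  using holding_pos[of i "Suc t"] by (simp add: gift_def fraction_Suc)

lemma holding_eq_sum_gifts:
  assumes "i < n"
  shows "x t i = (\<Sum>j<n. gift t i j)"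
proof (cases t)
  case 0
  then show ?thesis
    using assms by (simp add: gift_def fractions_0_sum flip: sum_distrib_right)
next
  case (Suc s)
  have "(\<Sum>j<n. gift t i j) = (\<Sum>j<n. v j * gift s j i)"
    unfolding Suc using assms by (intro sum.cong) (simp_all add: gift_Suc)
  then show ?thesis
    using assms by (simp add: Suc holding_Suc gift_def)
qed

lemma gift_le_holding:
  assumes "i < n" and "j < n"
  shows "gift t i j \<le> x t i"
  unfolding holding_eq_sum_gifts[OF \<open>i < n\<close>] using assms
  by (intro member_le_sum) (auto intro: less_imp_le gift_pos)

lemma gift_two_steps_power:
  "i < n \<Longrightarrow> j < n \<Longrightarrow> gift (2 * k + r) i j = (v i * v j) ^ k * gift r i j"
  by (induction k) (simp_all add: gift_Suc)

lemma gift_eq_power_times_gift_mod_2: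
  "i < n \<Longrightarrow> j < n \<Longrightarrow> gift t i j = (v i * v j) ^ (t div 2) * gift (t mod 2) i j"
  using gift_two_steps_power[of i j "t div 2" "t mod 2"] by simp

definition max_value :: real
  where "max_value = Max (v ` {..<n})"

lemma value_le_max_value: "j < n \<Longrightarrow> v j \<le> max_value"
  by (simp add: max_value_def)

lemma max_value_attained:
  obtains jmax where "jmax < n" "v jmax = max_value"
proof -
  have "max_value \<in> v ` {..<n}"
    unfolding max_value_def using players_nonempty
    by (intro Max_in) (simp_all add: lessThan_empty_iff)
  then obtain j where "j < n" "max_value = v j"
    by blast
  then show ?thesis
    using that by simp
qed

lemma max_value_pos: "0 < max_value"
proof -
  obtain j where "j < n" "v j = max_value"
    by (rule max_value_attained)
  then show ?thesis
    using value_pos[of j] by simp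
qed

lemma holding_lower_bound:
  assumes "i < n"
  shows "\<exists>c>0. \<forall>t. c * (v i * max_value) ^ (t div 2) \<le> x t i"
proof -
  obtain jmax where jmax: "jmax < n" "v jmax = max_value"
    by (rule max_value_attained)
  define c where "c = min (gift 0 i jmax) (gift 1 i jmax)"
  have "c * (v i * max_value) ^ (t div 2) \<le> x t i" for t
  proof -
    have "c \<le> gift (t mod 2) i jmax"
      unfolding c_def by (cases "even t") (simp_all add: mod2_eq_if)
    then have "c * (v i * max_value) ^ (t div 2)
        \<le> (v i * max_value) ^ (t div 2) * gift (t mod 2) i jmax"
      using assms max_value_pos value_pos by (simp add: mult.commute mult_left_mono)
    also have "\<dots> = gift t i jmax"
      using gift_eq_power_times_gift_mod_2[OF assms jmax(1), of t]
      by (simp add: jmax(2)[symmetric])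
    also have "\<dots> \<le> x t i"
      using assms jmax(1) by (rule gift_le_holding)
    finally show ?thesis .
  qed
  moreover have "0 < c"
    using assms jmax(1) by (simp add: c_def gift_pos)
  ultimately show ?thesis by blast
qed

lemma holding_upper_bound:
  assumes "i < n"
  shows "\<exists>d>0. \<forall>t. x t i \<le> d * (v i * max_value) ^ (t div 2)"
proof -
  define d where "d = max (x 0 i) (x 1 i)"
  have "x t i \<le> d * (v i * max_value) ^ (t div 2)" for t
  proof -
    have "x t i = (\<Sum>j<n. (v i * v j) ^ (t div 2) * gift (t mod 2) i j)"
      unfolding holding_eq_sum_gifts[OF assms]
      by (intro sum.cong) (simp_all add: gift_eq_power_times_gift_mod_2[OF assms, of _ t])
    also have "\<dots> \<le> (\<Sum>j<n. (v i * max_value) ^ (t div 2) * gift (t mod 2) i j)"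
    proof (rule sum_mono)
      fix j assume "j \<in> {..<n}"
      then have "(v i * v j) ^ (t div 2) \<le> (v i * max_value) ^ (t div 2)"
        using assms value_pos value_le_max_value
        by (intro power_mono mult_left_mono) (auto intro: less_imp_le)
      then show "(v i * v j) ^ (t div 2) * gift (t mod 2) i j
          \<le> (v i * max_value) ^ (t div 2) * gift (t mod 2) i j"
        using assms \<open>j \<in> {..<n}\<close> gift_pos by (intro mult_right_mono) (auto intro: less_imp_le)
    qed
    also have "\<dots> = (v i * max_value) ^ (t div 2) * x (t mod 2) i"
      by (simp add: holding_eq_sum_gifts[OF assms] sum_distrib_left)
    also have "\<dots> \<le> d * (v i * max_value) ^ (t div 2)"
      using assms max_value_pos value_pos
      by (cases "even t") (simp_all add: d_def mod2_eq_if mult.commute mult_left_mono)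
    finally show ?thesis .
  qed
  moreover have "0 < d"
    using assms by (simp add: d_def holding_pos less_max_iff_disj)
  ultimately show ?thesis by blast
qed

lemma holding_two_sided_bounds:
  assumes "i < n"
  shows "\<exists>c d. 0 < c \<and> 0 < d \<and> (\<forall>t. c * (v i * max_value) ^ (t div 2) \<le> x t i
                                   \<and> x t i \<le> d * (v i * max_value) ^ (t div 2))"
proof -
  obtain c where "0 < c" "\<forall>t. c * (v i * max_value) ^ (t div 2) \<le> x t i"
    using holding_lower_bound[OF assms] by blast
  moreover obtain d where "0 < d" "\<forall>t. x t i \<le> d * (v i * max_value) ^ (t div 2)"
    using holding_upper_bound[OF assms] by blast
  ultimately show ?thesis by blast
qed

lemma holding_at_top:
  assumes "i < n" and "1 / max_value < v i"
  shows "filterlim (\<lambda>t. x t i) at_top sequentially"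
proof -
  obtain c where "0 < c" and lower: "\<And>t. c * (v i * max_value) ^ (t div 2) \<le> x t i"
    using holding_lower_bound[OF \<open>i < n\<close>] by blast
  have "1 < v i * max_value"
    using assms(2) max_value_pos by (simp add: pos_divide_less_eq)
  with \<open>0 < c\<close> show ?thesis
    by (intro filterlim_at_top_if_geometric_lower_bound[OF _ _ _ lower])
      (simp_all add: filterlim_at_top_div_const_nat)
qed

lemma holding_tendsto_zero:
  assumes "i < n" and "v i < 1 / max_value"
  shows "(\<lambda>t. x t i) \<longlonglongrightarrow> 0"
proof -
  obtain d where upper: "\<And>t. x t i \<le> d * (v i * max_value) ^ (t div 2)"
    using holding_upper_bound[OF \<open>i < n\<close>] by blast
  have "\<bar>v i * max_value\<bar> < 1"
    using assms max_value_pos value_pos[OF \<open>i < n\<close>] by (simp add: pos_less_divide_eq)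
  then show ?thesis
    using holding_pos[OF \<open>i < n\<close>]
    by (intro tendsto_zero_if_geometric_upper_bound[OF _ _ _ upper])
      (simp_all add: filterlim_at_top_div_const_nat less_imp_le)
qed

lemma holding_bounded:
  assumes "i < n" and "v i = 1 / max_value"
  shows "\<exists>a b. 0 < a \<and> 0 < b \<and> (\<forall>t. a \<le> x t i \<and> x t i \<le> b)"
proof -
  have "v i * max_value = 1"
    using assms(2) max_value_pos by simp
  then show ?thesis
    using holding_two_sided_bounds[OF \<open>i < n\<close>] by auto
qed

end

theorem theorem1:
  fixes n :: nat and v :: "nat \<Rightarrow> real"
    and x :: "nat \<Rightarrow> nat \<Rightarrow> real" and y :: "nat \<Rightarrow> nat \<Rightarrow> nat \<Rightarrow> real"
  assumes "n \<ge> 1"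
    and "\<forall>j<n. v j > 0"
    and "\<forall>i<n. x 0 i > 0"
    and "\<forall>i<n. \<forall>j<n. y 0 i j > 0"
    and "\<forall>i<n. (\<Sum>j<n. y 0 i j) = 1"
    and "tft_dynamic n v x y"
  defines "vstar \<equiv> Max (v ` {..<n})"
  shows "\<forall>i<n.
      (\<exists>c d. c > 0 \<and> d > 0 \<and>
         (\<forall>t. c * (v i * vstar) ^ (t div 2) \<le> x t i \<and> x t i \<le> d * (v i * vstar) ^ (t div 2)))
    \<and> (v i > 1 / vstar \<longrightarrow> filterlim (\<lambda>t. x t i) at_top sequentially)
    \<and> (v i < 1 / vstar \<longrightarrow> (\<lambda>t. x t i) \<longlonglongrightarrow> 0)
    \<and> (v i = 1 / vstar \<longrightarrow> (\<exists>a b. a > 0 \<and> b > 0 \<and> (\<forall>t. a \<le> x t i \<and> x t i \<le> b)))"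
proof -
  interpret tft_game n v x y
    using assms(1-6) by unfold_locales auto
  have "vstar = max_value"
    by (simp add: vstar_def max_value_def)
  then show ?thesis
    using holding_two_sided_bounds holding_at_top holding_tendsto_zero holding_bounded
    by blast
qed

end
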